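(* Let $\beta>0$ and let $H$ be a $3$-graph of order $n$. Let $X,Y$ be a partition of $V(H)$. Suppose that there are at most $\beta\binom{|X|}{2}\binom{|Y|}{2}$ copies of $K_4^-$ in $H$ with two vertices in $X$ and two vertices in $Y$. Then \[(|Y|-1)\,e(XXY)+(|X|-1)\,e(XYY)\le 2(1+\beta)\binom{|X|}{2}\binom{|Y|}{2}.\]
   Context: $K_4^-$ is the $3$-graph with $4$ vertices and $3$ edges; the number of copies of $K_4^-$ means the number of $4$-subsets of $V(H)$ spanning at least $3$ edges of $H$. $e(XXY)$ is the number of edges of $H$ with exactly two vertices in $X$ and one in $Y$, and $e(XYY)$ the number with one vertex in $X$ and two in $Y$. *)

theory Defs
  imports Complex_Main
begin

definition three_graph :: "'a set \<Rightarrow> 'a set set \<Rightarrow> bool" where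
  "three_graph V E \<longleftrightarrow> finite V \<and> (\<forall>e\<in>E. e \<subseteq> V \<and> card e = 3)"

definition K4minus_copies :: "'a set \<Rightarrow> 'a set set \<Rightarrow> 'a set set" where
  "K4minus_copies V E = {S. S \<subseteq> V \<and> card S = 4 \<and> card {e\<in>E. e \<subseteq> S} \<ge> 3}"

definition eXXY :: "'a set set \<Rightarrow> 'a set \<Rightarrow> 'a set \<Rightarrow> nat" where
  "eXXY E X Y = card {e\<in>E. card (e \<inter> X) = 2 \<and> card (e \<inter> Y) = 1}"

end

theory Submission
  imports Defs
begin

text \<open>Double count the pairs (e, S) where e is an edge of H meeting both X and Y and S is a
  4-set with two vertices in X and two in Y containing e. An XXY-edge extends to such an S in
  |Y| - 1 ways and an XYY-edge in |X| - 1 ways. Conversely, S spans at most four edges, and at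
  most two unless S is a copy of K4^-. As there are C(|X|,2) C(|Y|,2) sets S, the number of pairs
  is at most 2 C(|X|,2) C(|Y|,2) plus twice the number of copies of K4^- of this type.\<close>

definition balanced_quadruples :: "'a set \<Rightarrow> 'a set \<Rightarrow> 'a set set" where
  "balanced_quadruples X Y = {S. S \<subseteq> X \<union> Y \<and> card (S \<inter> X) = 2 \<and> card (S \<inter> Y) = 2}"

lemma balanced_quadruples_commute: "balanced_quadruples Y X = balanced_quadruples X Y"
  unfolding balanced_quadruples_def by blast

lemma card_balanced_quadruple:
  assumes "finite X" "finite Y" "X \<inter> Y = {}" and "S \<in> balanced_quadruples X Y"
  shows "card S = 4"
proof -
  have "S = (S \<inter> X) \<union> (S \<inter> Y)"
    using assms(4) unfolding balanced_quadruples_def by blast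
  then have "card S = card (S \<inter> X) + card (S \<inter> Y)"
    using assms(1-3) by (metis card_Un_disjoint finite_Int Int_assoc Int_commute Int_empty_right)
  then show ?thesis
    using assms(4) unfolding balanced_quadruples_def by simp
qed

lemma card_balanced_quadruples:
  assumes "finite X" "finite Y" "X \<inter> Y = {}"
  shows "card (balanced_quadruples X Y) = (card X choose 2) * (card Y choose 2)"
proof -
  let ?A = "{A. A \<subseteq> X \<and> card A = 2}" and ?B = "{B. B \<subseteq> Y \<and> card B = 2}"
  have "balanced_quadruples X Y = (\<lambda>(A, B). A \<union> B) ` (?A \<times> ?B)"
  proof (intro set_eqI iffI)
    fix S assume "S \<in> balanced_quadruples X Y"
    then show "S \<in> (\<lambda>(A, B). A \<union> B) ` (?A \<times> ?B)"
      unfolding balanced_quadruples_def by (intro image_eqI[of _ _ "(S \<inter> X, S \<inter> Y)"]) auto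
  next
    fix S assume "S \<in> (\<lambda>(A, B). A \<union> B) ` (?A \<times> ?B)"
    then obtain A B where "A \<in> ?A" "B \<in> ?B" "S = A \<union> B" by auto
    moreover from this have "S \<inter> X = A" "S \<inter> Y = B" using assms(3) by auto
    ultimately show "S \<in> balanced_quadruples X Y"
      unfolding balanced_quadruples_def by auto
  qed
  moreover have "inj_on (\<lambda>(A, B). A \<union> B) (?A \<times> ?B)"
  proof (rule inj_onI, clarify)
    fix A B A' B' assume "A \<subseteq> X" "B \<subseteq> Y" "A' \<subseteq> X" "B' \<subseteq> Y" "A \<union> B = A' \<union> B'"
    moreover from this have "A = (A \<union> B) \<inter> X" "B = (A \<union> B) \<inter> Y" "A' = (A' \<union> B') \<inter> X" "B' = (A' \<union> B') \<inter> Y"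
      using assms(3) by auto
    ultimately show "A = A' \<and> B = B'"
      by metis
  qed
  ultimately have "card (balanced_quadruples X Y) = card ?A * card ?B"
    by (simp add: card_image card_cartesian_product)
  then show ?thesis
    using n_subsets[OF assms(1)] n_subsets[OF assms(2)] by simp
qed

lemma card_balanced_quadruples_containing:
  assumes "finite X" "finite Y" "X \<inter> Y = {}" "e \<subseteq> X \<union> Y"
    and eX: "card (e \<inter> X) = 2" and eY: "card (e \<inter> Y) = 1"
  shows "card {S \<in> balanced_quadruples X Y. e \<subseteq> S} = card Y - 1"
proof -
  have fin_e: "finite e"
    using assms(1,2,4) finite_subset by blast
  have "{S \<in> balanced_quadruples X Y. e \<subseteq> S} = (\<lambda>y. insert y e) ` (Y - e)"
  proof (intro set_eqI iffI)
    fix S assume "S \<in> {S \<in> balanced_quadruples X Y. e \<subseteq> S}"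
    then have S: "S \<subseteq> X \<union> Y" "card (S \<inter> X) = 2" "card (S \<inter> Y) = 2" "e \<subseteq> S"
      unfolding balanced_quadruples_def by auto
    have fin_S: "finite S"
      using S(1) assms(1,2) finite_subset by blast
    have "\<not> S \<inter> Y \<subseteq> e"
      using card_mono[OF finite_Int[OF disjI1[OF fin_e]], of "S \<inter> Y" Y] S(3) eY by auto
    then obtain y where y: "y \<in> S" "y \<in> Y" "y \<notin> e" by auto
    have "S \<inter> X = e \<inter> X"
      using card_subset_eq[of "S \<inter> X" "e \<inter> X"] fin_S S(2,4) eX by auto
    moreover have "S \<inter> Y = insert y (e \<inter> Y)"
      using card_subset_eq[of "S \<inter> Y" "insert y (e \<inter> Y)"] fin_S fin_e S(3,4) eY y by auto
    ultimately have "S = insert y e"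
      using S(1) assms(4) y(1) by blast
    then show "S \<in> (\<lambda>y. insert y e) ` (Y - e)"
      using y by auto
  next
    fix S assume "S \<in> (\<lambda>y. insert y e) ` (Y - e)"
    then obtain y where y: "y \<in> Y" "y \<notin> e" and S: "S = insert y e" by auto
    have "y \<notin> X" using y(1) assms(3) by auto
    then have "S \<inter> X = e \<inter> X" "S \<inter> Y = insert y (e \<inter> Y)"
      using S y by auto
    then show "S \<in> {S \<in> balanced_quadruples X Y. e \<subseteq> S}"
      using S y assms(4) eX eY fin_e unfolding balanced_quadruples_def by auto
  qed
  moreover have "inj_on (\<lambda>y. insert y e) (Y - e)"
    by (auto simp: inj_on_def)
  moreover have "card (Y - e) = card Y - 1"
    using card_Diff_subset_Int[of Y e] assms(2) eY by (simp add: Int_commute)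
  ultimately show ?thesis
    by (simp add: card_image)
qed

lemma card_edges_within_le_choose_3:
  assumes "finite S" "\<forall>e\<in>E. card e = 3"
  shows "card {e \<in> E. e \<subseteq> S} \<le> card S choose 3"
proof -
  have "card {e \<in> E. e \<subseteq> S} \<le> card {e. e \<subseteq> S \<and> card e = 3}"
    using assms by (intro card_mono) auto
  then show ?thesis
    using n_subsets[OF assms(1)] by simp
qed

lemma card_edges_within_4_set:
  assumes "three_graph V E" "S \<subseteq> V" "card S = 4"
  shows "card {e \<in> E. e \<subseteq> S} \<le> (if S \<in> K4minus_copies V E then 4 else 2)"
proof -
  have "card {e \<in> E. e \<subseteq> S} \<le> 4 choose 3"
    using assms card_edges_within_le_choose_3[of S E] card.infinite
    unfolding three_graph_def by fastforce
  also have "(4 :: nat) choose 3 = 4"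
    by (simp add: numeral_3_eq_3 numeral_eq_Suc)
  finally show ?thesis
    using assms(2,3) unfolding K4minus_copies_def by auto
qed

lemma sum_card_balanced_quadruples_containing:
  assumes H: "three_graph V E" and XY: "X \<union> Y = V" "X \<inter> Y = {}"
  shows "(\<Sum>e \<in> {e \<in> E. card (e \<inter> X) = 2 \<and> card (e \<inter> Y) = 1}.
            card {S \<in> balanced_quadruples X Y. e \<subseteq> S}) = eXXY E X Y * (card Y - 1)"
proof -
  have fin: "finite X" "finite Y"
    using H XY(1) unfolding three_graph_def by auto
  have "card {S \<in> balanced_quadruples X Y. e \<subseteq> S} = card Y - 1"
    if e: "e \<in> {e \<in> E. card (e \<inter> X) = 2 \<and> card (e \<inter> Y) = 1}" for e
  proof -
    have "e \<subseteq> X \<union> Y"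
      using e H XY(1) unfolding three_graph_def by blast
    then show ?thesis
      using e card_balanced_quadruples_containing[OF fin XY(2)] by blast
  qed
  then show ?thesis
    unfolding eXXY_def by simp
qed

lemma sum_card_edges_within_balanced_quadruples_le:
  assumes H: "three_graph V E" and XY: "X \<union> Y = V" "X \<inter> Y = {}"
  shows "(\<Sum>S \<in> balanced_quadruples X Y. card {e \<in> E. e \<subseteq> S})
           \<le> 2 * card (balanced_quadruples X Y)
             + 2 * card {S \<in> K4minus_copies V E. card (S \<inter> X) = 2 \<and> card (S \<inter> Y) = 2}"
proof -
  define Q where "Q = balanced_quadruples X Y"
  define K where "K = K4minus_copies V E"
  have fin: "finite V" "finite X" "finite Y"
    using H XY(1) unfolding three_graph_def by auto
  have fin_Q: "finite Q"
    using XY(1) by (intro finite_subset[of Q "Pow V"]) (auto simp: fin Q_def balanced_quadruples_def)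
  have "(\<Sum>S\<in>Q. card {e \<in> E. e \<subseteq> S}) \<le> (\<Sum>S\<in>Q. if S \<in> K then 4 else 2)"
  proof (rule sum_mono)
    fix S assume "S \<in> Q"
    then have "S \<subseteq> V" "card S = 4"
      using XY(1) card_balanced_quadruple[OF fin(2,3) XY(2), of S]
      unfolding Q_def balanced_quadruples_def by auto
    then show "card {e \<in> E. e \<subseteq> S} \<le> (if S \<in> K then 4 else 2)"
      unfolding K_def by (rule card_edges_within_4_set[OF H])
  qed
  also have "\<dots> = (\<Sum>S\<in>Q. 2 + (if S \<in> K then 2 else 0))"
    by (rule sum.cong) auto
  also have "\<dots> = 2 * card Q + 2 * card (Q \<inter> K)"
    unfolding sum.distrib using fin_Q by (simp add: sum.If_cases)
  also have "Q \<inter> K = {S \<in> K4minus_copies V E. card (S \<inter> X) = 2 \<and> card (S \<inter> Y) = 2}"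
    using XY(1) unfolding Q_def K_def balanced_quadruples_def K4minus_copies_def by auto
  finally show ?thesis
    unfolding Q_def .
qed

lemma crossing_edge_incidences_le:
  assumes H: "three_graph V E" and XY: "X \<union> Y = V" "X \<inter> Y = {}"
  shows "eXXY E X Y * (card Y - 1) + eXXY E Y X * (card X - 1)
           \<le> 2 * card (balanced_quadruples X Y)
             + 2 * card {S \<in> K4minus_copies V E. card (S \<inter> X) = 2 \<and> card (S \<inter> Y) = 2}"
proof -
  define Q where "Q = balanced_quadruples X Y"
  define F1 where "F1 = {e \<in> E. card (e \<inter> X) = 2 \<and> card (e \<inter> Y) = 1}"
  define F2 where "F2 = {e \<in> E. card (e \<inter> Y) = 2 \<and> card (e \<inter> X) = 1}"
  have fin: "finite V" and edges: "\<And>e. e \<in> E \<Longrightarrow> e \<subseteq> V"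
    using H unfolding three_graph_def by auto
  have fin_E: "finite E"
    using edges by (intro finite_subset[of E "Pow V"]) (auto simp: fin)
  then have fin_F: "finite F1" "finite F2"
    unfolding F1_def F2_def by simp_all
  have fin_Q: "finite Q"
    using XY(1) by (intro finite_subset[of Q "Pow V"]) (auto simp: fin Q_def balanced_quadruples_def)
  have "(\<Sum>e\<in>F1. card {S \<in> Q. e \<subseteq> S}) = card F1 * (card Y - 1)"
    using sum_card_balanced_quadruples_containing[OF H XY] unfolding F1_def Q_def eXXY_def .
  moreover have "(\<Sum>e\<in>F2. card {S \<in> Q. e \<subseteq> S}) = card F2 * (card X - 1)"
  proof -
    have "Y \<union> X = V" "Y \<inter> X = {}"
      using XY by auto
    from sum_card_balanced_quadruples_containing[OF H this] show ?thesis
      unfolding F2_def Q_def eXXY_def balanced_quadruples_commute[of Y X] .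
  qed
  moreover have "F1 \<inter> F2 = {}"
    unfolding F1_def F2_def by auto
  ultimately have "card F1 * (card Y - 1) + card F2 * (card X - 1)
      = (\<Sum>e\<in>F1 \<union> F2. card {S \<in> Q. e \<subseteq> S})"
    by (simp add: sum.union_disjoint[OF fin_F])
  also have "\<dots> = (\<Sum>S\<in>Q. card {e \<in> F1 \<union> F2. e \<subseteq> S})"
    using sum.swap_restrict[of "F1 \<union> F2" Q "\<lambda>_ _. 1::nat" "\<lambda>e S. e \<subseteq> S"] fin_F fin_Q by simp
  also have "\<dots> \<le> (\<Sum>S\<in>Q. card {e \<in> E. e \<subseteq> S})"
    using fin_E by (intro sum_mono card_mono) (auto simp: F1_def F2_def)
  also have "\<dots> \<le> 2 * card Q
      + 2 * card {S \<in> K4minus_copies V E. card (S \<inter> X) = 2 \<and> card (S \<inter> Y) = 2}"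
    unfolding Q_def by (rule sum_card_edges_within_balanced_quadruples_le[OF H XY])
  finally show ?thesis
    unfolding eXXY_def F1_def F2_def Q_def .
qed

theorem proposition3p4:
  fixes V X Y :: "'a set" and E :: "'a set set" and \<beta> :: real
  assumes "\<beta> > 0"
    and "three_graph V E"
    and "X \<union> Y = V" and "X \<inter> Y = {}"
    and "real (card {S\<in>K4minus_copies V E. card (S \<inter> X) = 2 \<and> card (S \<inter> Y) = 2})
           \<le> \<beta> * real (card X choose 2) * real (card Y choose 2)"
  shows "(real (card Y) - 1) * real (eXXY E X Y) + (real (card X) - 1) * real (eXXY E Y X)
           \<le> 2 * (1 + \<beta>) * real (card X choose 2) * real (card Y choose 2)"
proof -
  have fin: "finite X" "finite Y"
    using assms(2,3) unfolding three_graph_def by auto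
  have of_nat_pred_mult: "(real k - 1) * real m \<le> real (m * (k - 1))" for k m :: nat
    by (cases k) auto
  have "(real (card Y) - 1) * real (eXXY E X Y) + (real (card X) - 1) * real (eXXY E Y X)
      \<le> real (eXXY E X Y * (card Y - 1) + eXXY E Y X * (card X - 1))"
    using add_mono[OF of_nat_pred_mult of_nat_pred_mult] by simp
  also have "\<dots> \<le> real (2 * card (balanced_quadruples X Y)
      + 2 * card {S \<in> K4minus_copies V E. card (S \<inter> X) = 2 \<and> card (S \<inter> Y) = 2})"
    using crossing_edge_incidences_le[OF assms(2-4)] by (simp only: of_nat_le_iff)
  also have "\<dots> \<le> 2 * (1 + \<beta>) * real (card X choose 2) * real (card Y choose 2)"
    using assms(5) card_balanced_quadruples[OF fin assms(4)] by (simp add: algebra_simps)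
  finally show ?thesis .
qed

end
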